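(* Let $\mathscr T^+$ be the set of $(t,\omega)\in[0,T]\times\Omega$ such that $\nu(\{x:\psi_t(x)<0\})=0$, and $\mathscr T^-$ the set of $(t,\omega)$ such that $\nu(\{x:\psi_t(x)>0\})=0$. Assume (1) $\varphi_t<\int_{\mathbb R^*}\psi_t(x)\,\nu(dx)$ for all $(t,\omega)\in\mathscr T^+$; (2) $\varphi_t>\int_{\mathbb R^*}\psi_t(x)\,\nu(dx)$ for all $(t,\omega)\in\mathscr T^-$. Then for every $u\in\mathrm L^2(\nu)\cap\mathrm L^\infty(\nu)$ and every $t\in[0,T]$ (and $\omega$), the function $\lambda:\mathcal C\to\mathbb R$, $$\lambda(\pi)=\int_{\mathbb R^*}g_\alpha\big(u(x)-\pi\psi_t(x)\big)\,\nu(dx)-\pi\varphi_t,$$ admits a minimum in $\mathcal C$. If $\mathcal C=\mathbb R$, the minimum is unique.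
   Context: Setting: $T>0$; $\nu$ is a positive measure on $\mathbb R^*=\mathbb R\setminus\{0\}$ with $\nu(\{0\})=0$ and $\int(1\wedge|x|^2)\nu(dx)<\infty$ (the Lévy measure of a Poisson point process on a filtered probability space $(\Omega,\mathcal F,(\mathcal F_t),\mathbb P)$ which, together with an independent Brownian motion, generates the filtration). $\varphi=(\varphi_t)$ is a uniformly bounded predictable real process and $\psi=\psi_t(x)$ is a uniformly bounded predictable (i.e. $\mathcal P\otimes\mathcal B(\mathbb R^* )$-measurable) process with $\mathbb E\int_0^T\int\psi_t(x)^2\nu(dx)dt<\infty$ and $\psi>-1$. $\alpha>0$ and $g_\alpha(y)=\frac{e^{\alpha y}-\alpha y-1}{\alpha}$. $\mathcal C\subseteq\mathbb R$ is a closed set with $0\in\mathcal C$. $\mathrm L^2(\nu)$ and $\mathrm L^\infty(\nu)$ denote measurable $u:\mathbb R\to\mathbb R$ that are square-integrable w.r.t. $\nu$, resp. $\nu$-a.e. bounded. *)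

theory Defs
  imports "HOL-Analysis.Analysis"
begin

definition g_alpha :: "real \<Rightarrow> real \<Rightarrow> real" where
  "g_alpha \<alpha> y = (exp (\<alpha> * y) - \<alpha> * y - 1) / \<alpha>"

text \<open>The objective lambda(pi) = int g_alpha(u(x) - pi psi(x)) nu(dx) - pi phi,
  for fixed (t, omega), with psi = psi_t(omega, .) and phi = phi_t(omega).\<close>
definition lam_obj :: "real measure \<Rightarrow> real \<Rightarrow> (real \<Rightarrow> real) \<Rightarrow> (real \<Rightarrow> real) \<Rightarrow> real \<Rightarrow> real \<Rightarrow> real" where
  "lam_obj \<nu> \<alpha> u psi phi \<pi> = (\<integral>x. g_alpha \<alpha> (u x - \<pi> * psi x) \<partial>\<nu>) - \<pi> * phi"

end

theory Submission
  imports Defs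
begin

text \<open>The objective is a convex function of \<pi> (g_alpha is convex) and finite, since g_alpha is
  bounded by a quadratic on bounded arguments and u, \<psi> are bounded and square integrable.
  A convex function on the line attains its minimum on a closed set containing 0 as soon as it
  exceeds its value at 0 somewhere on each side of 0. If \<lambda>(\<pi>) \<le> \<lambda>(0) for all \<pi> > 0, then
  \<lambda>(\<pi>)/\<pi> \<le> \<phi> + \<lambda>(0)/\<pi>, and Fatou's lemma applied to g_alpha(u - \<pi>\<psi>)/\<pi> as \<pi> \<rightarrow> \<infinity> shows that
  \<psi> \<ge> 0 a.e. with \<integral>\<psi> d\<nu> \<le> \<phi>, contradicting (1); symmetrically for \<pi> < 0 and (2).
  Two distinct minimisers over \<real> would, by strict convexity of g_alpha, force \<psi> = 0 a.e.,
  which (1) and (2) together exclude.\<close>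

lemma borel_measurable_g_alpha [measurable]: "g_alpha \<alpha> \<in> borel_measurable borel"
  unfolding g_alpha_def by measurable

lemma g_alpha_nonneg:
  assumes "\<alpha> > 0" shows "0 \<le> g_alpha \<alpha> y"
  unfolding g_alpha_def using assms exp_ge_add_one_self[of "\<alpha> * y"]
  by (intro divide_nonneg_pos) (auto simp: algebra_simps)

lemma g_alpha_ge_linear:
  assumes "\<alpha> > 0" and "M \<ge> 0"
  shows "\<exists>c. \<forall>y. M * y - c \<le> g_alpha \<alpha> y"
proof -
  define K where "K = M + 1"
  have K: "K > 0" using \<open>M \<ge> 0\<close> by (simp add: K_def)
  have "M * y - (K * ln K - K + 1) / \<alpha> \<le> g_alpha \<alpha> y" for y
  proof -
    \<comment> \<open>the tangent to exp of slope K\<close>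
    have "K * (1 + (\<alpha> * y - ln K)) \<le> K * exp (\<alpha> * y - ln K)"
      using K exp_ge_add_one_self[of "\<alpha> * y - ln K"] by simp
    also have "\<dots> = exp (\<alpha> * y)" using K by (simp add: exp_diff)
    finally have "\<alpha> * (M * y) - (K * ln K - K + 1) \<le> exp (\<alpha> * y) - \<alpha> * y - 1"
      by (simp add: K_def algebra_simps)
    then have "(\<alpha> * (M * y) - (K * ln K - K + 1)) / \<alpha> \<le> g_alpha \<alpha> y"
      unfolding g_alpha_def using assms(1) by (intro divide_right_mono) auto
    then show ?thesis using assms(1) by (simp add: diff_divide_distrib)
  qed
  then show ?thesis by blast
qed

lemma g_alpha_div_ge:
  assumes "\<alpha> > 0" "m > 0" and c: "\<And>y. M * y - c \<le> g_alpha \<alpha> y"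
  shows "max (M * v / m - M * w - c / m) (w - (v + 1/\<alpha>) / m) \<le> g_alpha \<alpha> (v - m * w) / m"
proof -
  have "(M * (v - m * w) - c) / m \<le> g_alpha \<alpha> (v - m * w) / m"
    using c \<open>m > 0\<close> by (intro divide_right_mono) auto
  moreover have "(- (v - m * w) - 1/\<alpha>) / m \<le> g_alpha \<alpha> (v - m * w) / m"
    using assms exp_gt_zero[of "\<alpha> * (v - m * w)"] unfolding g_alpha_def
    by (intro divide_right_mono) (auto simp: field_simps)
  moreover have "(M * (v - m * w) - c) / m = M * v / m - M * w - c / m"
    and "(- (v - m * w) - 1/\<alpha>) / m = w - (v + 1/\<alpha>) / m"
    using \<open>m > 0\<close> by (simp_all add: field_simps)
  ultimately show ?thesis by simp
qed

lemma g_alpha_le_quadratic: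
  assumes "\<alpha> > 0" and "\<bar>y\<bar> \<le> R"
  shows "g_alpha \<alpha> y \<le> (\<alpha> * exp (\<alpha> * R) / 2) * y\<^sup>2"
proof -
  obtain t where t: "\<bar>t\<bar> \<le> \<bar>\<alpha> * y\<bar>"
    "exp (\<alpha> * y) = (\<Sum>m<2. (\<alpha> * y) ^ m / fact m) + exp t / fact 2 * (\<alpha> * y) ^ 2"
    using Maclaurin_exp_le[of "\<alpha> * y" 2] by blast
  have "\<bar>\<alpha> * y\<bar> \<le> \<alpha> * R" using assms by (simp add: abs_mult mult_left_mono)
  then have "exp t / 2 * (\<alpha> * y)\<^sup>2 \<le> exp (\<alpha> * R) / 2 * (\<alpha> * y)\<^sup>2"
    using t(1) by (intro mult_right_mono) auto
  moreover have "exp (\<alpha> * y) - \<alpha> * y - 1 = exp t / 2 * (\<alpha> * y)\<^sup>2"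
    using t(2) by (simp add: numeral_2_eq_2)
  ultimately show ?thesis unfolding g_alpha_def using assms(1)
    by (simp add: field_simps power2_eq_square)
qed

lemma convex_on_g_alpha:
  assumes "\<alpha> > 0" shows "convex_on UNIV (g_alpha \<alpha>)"
proof (rule convex_onI)
  fix s a b :: real assume s: "0 < s" "s < 1"
  have "exp ((1 - s) * (\<alpha> * a) + s * (\<alpha> * b)) \<le> (1 - s) * exp (\<alpha> * a) + s * exp (\<alpha> * b)"
    using convex_onD[OF exp_convex, of s "\<alpha> * a" "\<alpha> * b"] s by simp
  then have "(exp (\<alpha> * ((1 - s) * a + s * b)) - \<alpha> * ((1 - s) * a + s * b) - 1) / \<alpha>
      \<le> ((1 - s) * (exp (\<alpha> * a) - \<alpha> * a - 1) + s * (exp (\<alpha> * b) - \<alpha> * b - 1)) / \<alpha>"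
    using assms by (intro divide_right_mono) (auto simp: algebra_simps)
  then show "g_alpha \<alpha> ((1 - s) *\<^sub>R a + s *\<^sub>R b) \<le> (1 - s) * g_alpha \<alpha> a + s * g_alpha \<alpha> b"
    unfolding g_alpha_def by (simp add: add_divide_distrib)
qed simp

lemma g_alpha_midpoint_less:
  assumes "\<alpha> > 0" and "x \<noteq> y"
  shows "g_alpha \<alpha> ((x + y) / 2) < (g_alpha \<alpha> x + g_alpha \<alpha> y) / 2"
proof -
  have "exp (\<alpha> * x / 2) \<noteq> exp (\<alpha> * y / 2)" using assms by simp
  then have "0 < (exp (\<alpha> * x / 2) - exp (\<alpha> * y / 2))\<^sup>2" by simp
  also have "\<dots> = exp (\<alpha> * x) + exp (\<alpha> * y) - 2 * exp (\<alpha> * ((x + y) / 2))"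
    by (simp add: power2_eq_square algebra_simps flip: exp_add)
  finally have "(exp (\<alpha> * ((x + y) / 2)) - \<alpha> * ((x + y) / 2) - 1) / \<alpha>
      < ((exp (\<alpha> * x) - \<alpha> * x - 1 + (exp (\<alpha> * y) - \<alpha> * y - 1)) / 2) / \<alpha>"
    using assms(1) by (intro divide_strict_right_mono) (auto simp: field_simps)
  moreover have "(g_alpha \<alpha> x + g_alpha \<alpha> y) / 2
      = ((exp (\<alpha> * x) - \<alpha> * x - 1 + (exp (\<alpha> * y) - \<alpha> * y - 1)) / 2) / \<alpha>"
    unfolding g_alpha_def using assms(1) by (simp add: field_simps)
  ultimately show ?thesis unfolding g_alpha_def by linarith
qed

lemma convex_on_gt_on_ray:
  fixes L :: "real \<Rightarrow> real"
  assumes "convex_on UNIV L" and "0 < s" "s < 1" and "L 0 < L (s * y)"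
  shows "L 0 < L y"
proof -
  have "L (s * y) \<le> (1 - s) * L 0 + s * L y"
    using convex_onD[OF assms(1), of s 0 y] assms(2,3) by simp
  then have "0 < s * (L y - L 0)" using assms(4) by (simp add: algebra_simps)
  then show ?thesis using assms(2) by (simp add: zero_less_mult_iff)
qed

lemma convex_on_attains_min_closed:
  fixes L :: "real \<Rightarrow> real"
  assumes cv: "convex_on UNIV L"
    and a: "0 < a" "L 0 < L a" and b: "b < 0" "L 0 < L b"
    and C: "closed C" "0 \<in> C"
  shows "\<exists>\<pi>\<in>C. \<forall>\<pi>'\<in>C. L \<pi> \<le> L \<pi>'"
proof -
  have "continuous_on UNIV L" by (rule convex_on_continuous[OF open_UNIV cv])
  moreover have "compact (C \<inter> {b..a})" using C by (intro closed_Int_compact) auto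
  moreover have "0 \<in> C \<inter> {b..a}" using C a b by auto
  ultimately obtain \<pi> where \<pi>: "\<pi> \<in> C \<inter> {b..a}" "\<And>y. y \<in> C \<inter> {b..a} \<Longrightarrow> L \<pi> \<le> L y"
    using continuous_attains_inf[of "C \<inter> {b..a}" L] continuous_on_subset by blast
  have outside: "L 0 < L y" if "y \<notin> {b..a}" for y
  proof (cases "y > a")
    case True
    then show ?thesis using convex_on_gt_on_ray[OF cv, of "a / y" y] a by auto
  next
    case False
    with that have "y < b" by auto
    then show ?thesis using convex_on_gt_on_ray[OF cv, of "b / y" y] b
      by (auto simp: divide_less_eq divide_neg_neg)
  qed
  have "L \<pi> \<le> L 0" using \<pi> C a b by auto
  then have "L \<pi> \<le> L y" if "y \<in> C" for y
    using \<pi>(2)[of y] outside[of y] that by (cases "y \<in> {b..a}") auto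
  with \<pi> show ?thesis by blast
qed

lemma nn_integral_neg_part_cmult_unbounded:
  fixes f :: "'a \<Rightarrow> real"
  assumes [measurable]: "f \<in> borel_measurable M"
    and neg: "emeasure M {x \<in> space M. f x < 0} \<noteq> 0"
  shows "\<exists>c\<ge>0. ennreal p < (\<integral>\<^sup>+x. ennreal (c * - f x) \<partial>M)"
proof -
  define X where "X = (\<integral>\<^sup>+x. ennreal (- f x) \<partial>M)"
  have "X \<noteq> 0"
  proof
    assume "X = 0"
    then have "AE x in M. ennreal (- f x) = 0"
      unfolding X_def by (simp add: nn_integral_0_iff_AE)
    then have "AE x in M. \<not> f x < 0"
      by (rule eventually_mono) (simp add: ennreal_eq_0_iff)
    then have "emeasure M {x \<in> space M. f x < 0} = 0"
      using AE_iff_measurable[OF _ refl, of M "\<lambda>x. \<not> f x < 0"] by simp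
    with neg show False by contradiction
  qed
  have cX: "(\<integral>\<^sup>+x. ennreal (c * - f x) \<partial>M) = ennreal c * X" if "c \<ge> 0" for c
  proof -
    have "(\<integral>\<^sup>+x. ennreal (c * - f x) \<partial>M) = (\<integral>\<^sup>+x. ennreal c * ennreal (- f x) \<partial>M)"
      by (intro nn_integral_cong ennreal_mult'[OF that])
    then show ?thesis unfolding X_def by (simp add: nn_integral_cmult)
  qed
  show ?thesis
  proof (cases X rule: ennreal_cases)
    case (real r)
    with \<open>X \<noteq> 0\<close> have "r > 0" by auto
    define c where "c = (max p 0 + 1) / r"
    have "c \<ge> 0" using \<open>r > 0\<close> by (simp add: c_def)
    have "ennreal c * X = ennreal (max p 0 + 1)"
      using \<open>r > 0\<close> \<open>c \<ge> 0\<close> by (simp add: real c_def ennreal_mult[symmetric])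
    moreover have "ennreal p < ennreal (max p 0 + 1)"
      by (rule ennreal_lessI) auto
    ultimately show ?thesis using cX[OF \<open>c \<ge> 0\<close>] \<open>c \<ge> 0\<close> by auto
  next
    case top
    then have "(\<integral>\<^sup>+x. ennreal (1 * - f x) \<partial>M) = \<infinity>" using cX[of 1] by simp
    then show ?thesis by (intro exI[of _ 1]) simp
  qed
qed

lemma lam_obj_uminus: "lam_obj \<nu> \<alpha> u (\<lambda>x. - f x) (- p) \<pi> = lam_obj \<nu> \<alpha> u f p (- \<pi>)"
  unfolding lam_obj_def by simp

locale lam_obj_setting =
  fixes \<nu> :: "real measure" and \<alpha> :: real and u f :: "real \<Rightarrow> real" and p :: real
  assumes alpha_pos: "\<alpha> > 0"
    and sets_nu: "sets \<nu> = sets borel"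
    and u_borel: "u \<in> borel_measurable borel" and f_borel: "f \<in> borel_measurable borel"
    and u_L2: "integrable \<nu> (\<lambda>x. (u x)\<^sup>2)" and f_L2: "integrable \<nu> (\<lambda>x. (f x)\<^sup>2)"
    and u_bdd: "\<exists>B. AE x in \<nu>. \<bar>u x\<bar> \<le> B" and f_bdd: "\<exists>K. AE x in \<nu>. \<bar>f x\<bar> \<le> K"
begin

abbreviation L :: "real \<Rightarrow> real" where "L \<equiv> lam_obj \<nu> \<alpha> u f p"

lemma space_nu: "space \<nu> = UNIV"
  using sets_eq_imp_space_eq[OF sets_nu] by simp

lemma u_measurable [measurable]: "u \<in> borel_measurable \<nu>"
  using u_borel measurable_cong_sets[OF sets_nu refl] by metis

lemma f_measurable [measurable]: "f \<in> borel_measurable \<nu>"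
  using f_borel measurable_cong_sets[OF sets_nu refl] by metis

lemma integrable_g_alpha: "integrable \<nu> (\<lambda>x. g_alpha \<alpha> (u x - \<pi> * f x))"
proof -
  obtain B K where B: "AE x in \<nu>. \<bar>u x\<bar> \<le> B" and K: "AE x in \<nu>. \<bar>f x\<bar> \<le> K"
    using u_bdd f_bdd by blast
  define c where "c = \<alpha> * exp (\<alpha> * (B + \<bar>\<pi>\<bar> * K)) / 2"
  have "c \<ge> 0" using alpha_pos by (simp add: c_def)
  show ?thesis
  proof (rule Bochner_Integration.integrable_bound)
    show "integrable \<nu> (\<lambda>x. c * (2 * (u x)\<^sup>2 + 2 * \<pi>\<^sup>2 * (f x)\<^sup>2))"
      using u_L2 f_L2 by auto
    show "AE x in \<nu>. norm (g_alpha \<alpha> (u x - \<pi> * f x)) \<le> norm (c * (2 * (u x)\<^sup>2 + 2 * \<pi>\<^sup>2 * (f x)\<^sup>2))"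
      using B K
    proof eventually_elim
      case (elim x)
      have "\<bar>\<pi> * f x\<bar> \<le> \<bar>\<pi>\<bar> * K" using elim by (simp add: abs_mult mult_left_mono)
      then have "g_alpha \<alpha> (u x - \<pi> * f x) \<le> c * (u x - \<pi> * f x)\<^sup>2"
        unfolding c_def using elim by (intro g_alpha_le_quadratic alpha_pos) auto
      also have "\<dots> \<le> c * (2 * (u x)\<^sup>2 + 2 * \<pi>\<^sup>2 * (f x)\<^sup>2)"
        using \<open>c \<ge> 0\<close> sum_squares_ge_zero[of "u x + \<pi> * f x" 0]
        by (intro mult_left_mono) (auto simp: power2_eq_square algebra_simps)
      finally show ?case using g_alpha_nonneg[OF alpha_pos] \<open>c \<ge> 0\<close> by simp
    qed
  qed simp
qed

lemma convex_on_L: "convex_on UNIV L"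
proof (rule convex_onI)
  fix t x y :: real assume t: "0 < t" "t < 1"
  have "g_alpha \<alpha> (u z - ((1 - t) *\<^sub>R x + t *\<^sub>R y) * f z)
      \<le> (1 - t) * g_alpha \<alpha> (u z - x * f z) + t * g_alpha \<alpha> (u z - y * f z)" for z
    using convex_onD[OF convex_on_g_alpha[OF alpha_pos], of t "u z - x * f z" "u z - y * f z"] t
    by (simp add: algebra_simps)
  then have "(\<integral>z. g_alpha \<alpha> (u z - ((1 - t) *\<^sub>R x + t *\<^sub>R y) * f z) \<partial>\<nu>)
      \<le> (\<integral>z. (1 - t) * g_alpha \<alpha> (u z - x * f z) + t * g_alpha \<alpha> (u z - y * f z) \<partial>\<nu>)"
    using integrable_g_alpha by (intro integral_mono) auto
  also have "\<dots> = (1 - t) * (\<integral>z. g_alpha \<alpha> (u z - x * f z) \<partial>\<nu>) + t * (\<integral>z. g_alpha \<alpha> (u z - y * f z) \<partial>\<nu>)"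
    using integrable_g_alpha by simp
  finally show "L ((1 - t) *\<^sub>R x + t *\<^sub>R y) \<le> (1 - t) * L x + t * L y"
    unfolding lam_obj_def by (simp add: algebra_simps)
qed simp

text \<open>If L never exceeds L 0 to the right, then L m / m \<le> p + L 0 / m for all m > 0; Fatou's lemma
  for g_alpha (u - m f) / m as m \<rightarrow> \<infinity>, bounded below through the affine minorants of g_alpha of
  slopes -1 and M, turns this into the bound below.\<close>

lemma nn_integral_max_le_if_not_increasing:
  assumes not_incr: "\<And>a. 0 < a \<Longrightarrow> L a \<le> L 0" and "M \<ge> 0"
  shows "(\<integral>\<^sup>+x. ennreal (max (- M * f x) (f x)) \<partial>\<nu>) \<le> ennreal p"
proof -
  obtain c where c: "\<And>y. M * y - c \<le> g_alpha \<alpha> y"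
    using g_alpha_ge_linear[OF alpha_pos \<open>M \<ge> 0\<close>] by blast
  define F where "F n x = ennreal (g_alpha \<alpha> (u x - real (Suc n) * f x) / real (Suc n))" for n x
  have F_measurable: "F n \<in> borel_measurable \<nu>" for n unfolding F_def by measurable
  have "ennreal (max (- M * f x) (f x)) \<le> liminf (\<lambda>n. F n x)" for x
  proof -
    let ?G = "\<lambda>n. max (M * u x / real (Suc n) - M * f x - c / real (Suc n))
                      (f x - (u x + 1/\<alpha>) / real (Suc n))"
    have "?G \<longlonglongrightarrow> max (0 - M * f x - 0) (f x - 0)"
      by (intro tendsto_intros LIMSEQ_Suc[OF lim_const_over_n])
    then have "ennreal (max (- M * f x) (f x)) = liminf (\<lambda>n. ennreal (?G n))"
      using lim_imp_Liminf[OF trivial_limit_sequentially tendsto_ennrealI] by simp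
    also have "\<dots> \<le> liminf (\<lambda>n. F n x)"
      unfolding F_def using g_alpha_div_ge[OF alpha_pos _ c]
      by (intro Liminf_mono always_eventually allI ennreal_leI) auto
    finally show ?thesis .
  qed
  then have "(\<integral>\<^sup>+x. ennreal (max (- M * f x) (f x)) \<partial>\<nu>) \<le> (\<integral>\<^sup>+x. liminf (\<lambda>n. F n x) \<partial>\<nu>)"
    by (intro nn_integral_mono)
  also have "\<dots> \<le> liminf (\<lambda>n. integral\<^sup>N \<nu> (F n))"
    by (rule nn_integral_liminf[OF F_measurable])
  also have "\<dots> \<le> liminf (\<lambda>n. ennreal (p + L 0 / real (Suc n)))"
  proof (intro Liminf_mono always_eventually allI)
    fix n
    let ?m = "real (Suc n)"
    have F_integral: "integral\<^sup>N \<nu> (F n) = ennreal ((\<integral>x. g_alpha \<alpha> (u x - ?m * f x) \<partial>\<nu>) / ?m)"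
      unfolding F_def using integrable_g_alpha g_alpha_nonneg[OF alpha_pos]
      by (subst nn_integral_eq_integral) auto
    have "(\<integral>x. g_alpha \<alpha> (u x - ?m * f x) \<partial>\<nu>) \<le> L 0 + ?m * p"
      using not_incr[of ?m] unfolding lam_obj_def by simp
    then have "(\<integral>x. g_alpha \<alpha> (u x - ?m * f x) \<partial>\<nu>) / ?m \<le> (L 0 + ?m * p) / ?m"
      by (intro divide_right_mono) auto
    also have "\<dots> = p + L 0 / ?m"
      by (simp add: add_divide_distrib)
    finally show "integral\<^sup>N \<nu> (F n) \<le> ennreal (p + L 0 / ?m)"
      unfolding F_integral by (rule ennreal_leI)
  qed
  also have "\<dots> = ennreal p"
  proof -
    have "(\<lambda>n. p + L 0 / real (Suc n)) \<longlonglongrightarrow> p + 0"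
      by (intro tendsto_add tendsto_const LIMSEQ_Suc[OF lim_const_over_n])
    then show ?thesis
      using lim_imp_Liminf[OF trivial_limit_sequentially tendsto_ennrealI] by simp
  qed
  finally show ?thesis .
qed

lemma lam_obj_exceeds_right:
  assumes pos: "emeasure \<nu> {x. f x < 0} = 0 \<Longrightarrow> ereal p < enn2ereal (\<integral>\<^sup>+x. ennreal (f x) \<partial>\<nu>)"
  shows "\<exists>a>0. L 0 < L a"
proof (rule ccontr)
  assume "\<not> ?thesis"
  then have not_incr: "\<And>a. 0 < a \<Longrightarrow> L a \<le> L 0" by (meson not_less)
  have L_ge: "- a * p \<le> L a" for a
    unfolding lam_obj_def using g_alpha_nonneg[OF alpha_pos] by (simp add: integral_nonneg_AE)
  consider "p < 0" | "p \<ge> 0" "emeasure \<nu> {x. f x < 0} = 0" | "emeasure \<nu> {x. f x < 0} \<noteq> 0"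
    by fastforce
  then show False
  proof cases
    case 1
    define a where "a = (\<bar>L 0\<bar> + 1) / - p"
    have "0 < a" and "- a * p = \<bar>L 0\<bar> + 1"
      using 1 by (auto simp: a_def intro!: divide_pos_neg)
    then show False using not_incr[of a] L_ge[of a] by linarith
  next
    case 2
    have "(\<integral>\<^sup>+x. ennreal (f x) \<partial>\<nu>) \<le> ennreal p"
      using nn_integral_max_le_if_not_increasing[OF not_incr, of 0] by (simp add: ennreal_max_0)
    then have "enn2ereal (\<integral>\<^sup>+x. ennreal (f x) \<partial>\<nu>) \<le> ereal p"
      using 2(1) by (metis enn2ereal_ennreal less_eq_ennreal.rep_eq)
    with pos[OF 2(2)] show False by simp
  next
    case 3
    then obtain c where c: "c \<ge> 0" "ennreal p < (\<integral>\<^sup>+x. ennreal (c * - f x) \<partial>\<nu>)"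
      using nn_integral_neg_part_cmult_unbounded[OF f_measurable, of p] by (auto simp: space_nu)
    from c(2) have "ennreal p < (\<integral>\<^sup>+x. ennreal (max (- c * f x) (f x)) \<partial>\<nu>)"
      by (rule order.strict_trans2) (intro nn_integral_mono ennreal_leI, auto)
    also have "\<dots> \<le> ennreal p"
      by (rule nn_integral_max_le_if_not_increasing[OF not_incr c(1)])
    finally show False by simp
  qed
qed

lemma lam_obj_exceeds_left:
  assumes neg: "emeasure \<nu> {x. f x > 0} = 0 \<Longrightarrow> - enn2ereal (\<integral>\<^sup>+x. ennreal (- f x) \<partial>\<nu>) < ereal p"
  shows "\<exists>b<0. L 0 < L b"
proof -
  interpret reflected: lam_obj_setting \<nu> \<alpha> u "\<lambda>x. - f x" "- p"
    using f_bdd by unfold_locales (auto simp: alpha_pos sets_nu u_borel f_borel u_L2 f_L2 u_bdd)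
  have "\<exists>a>0. reflected.L 0 < reflected.L a"
    using neg by (intro reflected.lam_obj_exceeds_right) (auto simp: ereal_uminus_less_reorder)
  then show ?thesis unfolding lam_obj_uminus by (metis neg_less_0_iff_less minus_zero)
qed

lemma AE_eq_0_if_two_minimisers:
  assumes min1: "\<And>\<pi>. L \<pi>1 \<le> L \<pi>" and min2: "\<And>\<pi>. L \<pi>2 \<le> L \<pi>" and "\<pi>1 \<noteq> \<pi>2"
  shows "AE x in \<nu>. f x = 0"
proof -
  define m where "m = (\<pi>1 + \<pi>2) / 2"
  define D where "D x = (g_alpha \<alpha> (u x - \<pi>1 * f x) + g_alpha \<alpha> (u x - \<pi>2 * f x)) / 2
                        - g_alpha \<alpha> (u x - m * f x)" for x
  have D_pos: "0 < D x" if "f x \<noteq> 0" for x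
  proof -
    have mid: "u x - m * f x = ((u x - \<pi>1 * f x) + (u x - \<pi>2 * f x)) / 2"
      by (simp add: m_def field_simps)
    have "u x - \<pi>1 * f x \<noteq> u x - \<pi>2 * f x" using that \<open>\<pi>1 \<noteq> \<pi>2\<close> by simp
    from g_alpha_midpoint_less[OF alpha_pos this] show ?thesis unfolding D_def mid by simp
  qed
  have D_nonneg: "0 \<le> D x" for x
    using D_pos[of x] by (cases "f x = 0") (auto simp: D_def m_def)
  have D_integrable: "integrable \<nu> D" unfolding D_def using integrable_g_alpha by auto
  have "integral\<^sup>L \<nu> D = ((\<integral>x. g_alpha \<alpha> (u x - \<pi>1 * f x) \<partial>\<nu>) + (\<integral>x. g_alpha \<alpha> (u x - \<pi>2 * f x) \<partial>\<nu>)) / 2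
      - (\<integral>x. g_alpha \<alpha> (u x - m * f x) \<partial>\<nu>)"
    unfolding D_def using integrable_g_alpha by simp
  also have "\<dots> = (L \<pi>1 + L \<pi>2) / 2 - L m"
    unfolding lam_obj_def by (simp add: m_def field_simps)
  finally have "integral\<^sup>L \<nu> D \<le> 0" using min1[of m] min2[of m] by simp
  moreover have "0 \<le> integral\<^sup>L \<nu> D" using D_nonneg by (simp add: integral_nonneg_AE)
  ultimately have "integral\<^sup>L \<nu> D = 0" by simp
  then have "AE x in \<nu>. D x = 0" using integral_nonneg_eq_0_iff_AE[OF D_integrable] D_nonneg by simp
  then show ?thesis by eventually_elim (use D_pos in fastforce)
qed

lemma not_AE_eq_0:
  assumes pos: "emeasure \<nu> {x. f x < 0} = 0 \<Longrightarrow> ereal p < enn2ereal (\<integral>\<^sup>+x. ennreal (f x) \<partial>\<nu>)"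
    and neg: "emeasure \<nu> {x. f x > 0} = 0 \<Longrightarrow> - enn2ereal (\<integral>\<^sup>+x. ennreal (- f x) \<partial>\<nu>) < ereal p"
  shows "\<not> (AE x in \<nu>. f x = 0)"
proof
  assume ae: "AE x in \<nu>. f x = 0"
  have null_iff: "emeasure \<nu> {x. P x} = 0 \<longleftrightarrow> (AE x in \<nu>. \<not> P x)"
    if "{x \<in> space \<nu>. P x} \<in> sets \<nu>" for P
    using AE_iff_measurable[OF that, of "\<lambda>x. \<not> P x"] by (simp add: space_nu)
  have "emeasure \<nu> {x. f x < 0} = 0"
    using ae by (subst null_iff) (measurable, simp add: eventually_mono)
  moreover have "emeasure \<nu> {x. f x > 0} = 0"
    using ae by (subst null_iff) (measurable, simp add: eventually_mono)
  moreover have "(\<integral>\<^sup>+x. ennreal (f x) \<partial>\<nu>) = 0" and "(\<integral>\<^sup>+x. ennreal (- f x) \<partial>\<nu>) = 0"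
    using ae by (simp_all add: nn_integral_0_iff_AE eventually_mono)
  ultimately show False using pos neg by (simp add: zero_ennreal.rep_eq)
qed

lemma lam_obj_attains_min:
  assumes pos: "emeasure \<nu> {x. f x < 0} = 0 \<Longrightarrow> ereal p < enn2ereal (\<integral>\<^sup>+x. ennreal (f x) \<partial>\<nu>)"
    and neg: "emeasure \<nu> {x. f x > 0} = 0 \<Longrightarrow> - enn2ereal (\<integral>\<^sup>+x. ennreal (- f x) \<partial>\<nu>) < ereal p"
    and "closed C" "0 \<in> C"
  shows "\<exists>\<pi>\<in>C. \<forall>\<pi>'\<in>C. L \<pi> \<le> L \<pi>'"
proof -
  obtain a where "0 < a" "L 0 < L a" using lam_obj_exceeds_right[OF pos] by blast
  moreover obtain b where "b < 0" "L 0 < L b" using lam_obj_exceeds_left[OF neg] by blast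
  ultimately show ?thesis using convex_on_attains_min_closed[OF convex_on_L] assms(3,4) by blast
qed

lemma lam_obj_unique_min:
  assumes pos: "emeasure \<nu> {x. f x < 0} = 0 \<Longrightarrow> ereal p < enn2ereal (\<integral>\<^sup>+x. ennreal (f x) \<partial>\<nu>)"
    and neg: "emeasure \<nu> {x. f x > 0} = 0 \<Longrightarrow> - enn2ereal (\<integral>\<^sup>+x. ennreal (- f x) \<partial>\<nu>) < ereal p"
  shows "\<exists>!\<pi>. \<forall>\<pi>'. L \<pi> \<le> L \<pi>'"
proof -
  obtain \<pi> where "\<forall>\<pi>'. L \<pi> \<le> L \<pi>'" using lam_obj_attains_min[OF pos neg, of UNIV] by auto
  moreover have "\<pi>1 = \<pi>2" if "\<forall>\<pi>'. L \<pi>1 \<le> L \<pi>'" "\<forall>\<pi>'. L \<pi>2 \<le> L \<pi>'" for \<pi>1 \<pi>2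
    using AE_eq_0_if_two_minimisers[of \<pi>1 \<pi>2] not_AE_eq_0[OF pos neg] that by blast
  ultimately show ?thesis by blast
qed

end

theorem theorem3p1:
  fixes T \<alpha> :: real
    and \<nu> :: "real measure"
    and \<phi> :: "real \<Rightarrow> 'w \<Rightarrow> real"
    and \<psi> :: "real \<Rightarrow> 'w \<Rightarrow> real \<Rightarrow> real"
    and C :: "real set"
  assumes T_pos: "T > 0"
    and alpha_pos: "\<alpha> > 0"
    and nu_sets: "sets \<nu> = sets borel"
    and nu_zero: "emeasure \<nu> {0} = 0"
    and nu_levy: "(\<integral>\<^sup>+ x. ennreal (min 1 (x\<^sup>2)) \<partial>\<nu>) < \<infinity>"
    and phi_bdd: "\<exists>K. \<forall>t \<omega>. \<bar>\<phi> t \<omega>\<bar> \<le> K"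
    and psi_bdd: "\<exists>K. \<forall>t \<omega> x. x \<noteq> 0 \<longrightarrow> \<bar>\<psi> t \<omega> x\<bar> \<le> K"
    and psi_meas: "\<And>t \<omega>. \<psi> t \<omega> \<in> borel_measurable borel"
    and psi_L2: "\<And>t \<omega>. integrable \<nu> (\<lambda>x. (\<psi> t \<omega> x)\<^sup>2)"
    and psi_gt: "\<And>t \<omega> x. x \<noteq> 0 \<Longrightarrow> \<psi> t \<omega> x > -1"
    and C_closed: "closed C"
    and C_zero: "0 \<in> C"
    and cond_plus: "\<And>t \<omega>. t \<in> {0..T} \<Longrightarrow> emeasure \<nu> {x. \<psi> t \<omega> x < 0} = 0 \<Longrightarrow>
        ereal (\<phi> t \<omega>) < enn2ereal (\<integral>\<^sup>+ x. ennreal (\<psi> t \<omega> x) \<partial>\<nu>)"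
    and cond_minus: "\<And>t \<omega>. t \<in> {0..T} \<Longrightarrow> emeasure \<nu> {x. \<psi> t \<omega> x > 0} = 0 \<Longrightarrow>
        ereal (\<phi> t \<omega>) > - enn2ereal (\<integral>\<^sup>+ x. ennreal (- \<psi> t \<omega> x) \<partial>\<nu>)"
  shows "\<forall>u t \<omega>. u \<in> borel_measurable borel \<and> integrable \<nu> (\<lambda>x. (u x)\<^sup>2)
             \<and> (\<exists>B. AE x in \<nu>. \<bar>u x\<bar> \<le> B) \<and> t \<in> {0..T} \<longrightarrow>
           (\<exists>\<pi>\<in>C. \<forall>\<pi>'\<in>C. lam_obj \<nu> \<alpha> u (\<psi> t \<omega>) (\<phi> t \<omega>) \<pi> \<le> lam_obj \<nu> \<alpha> u (\<psi> t \<omega>) (\<phi> t \<omega>) \<pi>')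
           \<and> (C = UNIV \<longrightarrow>
               (\<exists>!\<pi>. \<forall>\<pi>'. lam_obj \<nu> \<alpha> u (\<psi> t \<omega>) (\<phi> t \<omega>) \<pi> \<le> lam_obj \<nu> \<alpha> u (\<psi> t \<omega>) (\<phi> t \<omega>) \<pi>'))"
proof (intro allI impI)
  fix u :: "real \<Rightarrow> real" and t :: real and \<omega> :: 'w
  assume u: "u \<in> borel_measurable borel \<and> integrable \<nu> (\<lambda>x. (u x)\<^sup>2)
      \<and> (\<exists>B. AE x in \<nu>. \<bar>u x\<bar> \<le> B) \<and> t \<in> {0..T}"
  then have t: "t \<in> {0..T}" by simp
  have "AE x in \<nu>. x \<noteq> 0"
    using nu_zero nu_sets by (intro AE_I'[of "{0}"]) auto
  moreover obtain K where "\<forall>t \<omega> x. x \<noteq> 0 \<longrightarrow> \<bar>\<psi> t \<omega> x\<bar> \<le> K" using psi_bdd by blast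
  ultimately have "AE x in \<nu>. \<bar>\<psi> t \<omega> x\<bar> \<le> K" by (auto elim: eventually_mono)
  then interpret lam_obj_setting \<nu> \<alpha> u "\<psi> t \<omega>" "\<phi> t \<omega>"
    using u alpha_pos nu_sets psi_meas psi_L2 by unfold_locales auto
  show "(\<exists>\<pi>\<in>C. \<forall>\<pi>'\<in>C. L \<pi> \<le> L \<pi>') \<and> (C = UNIV \<longrightarrow> (\<exists>!\<pi>. \<forall>\<pi>'. L \<pi> \<le> L \<pi>'))"
    using lam_obj_attains_min[OF cond_plus[OF t] cond_minus[OF t] C_closed C_zero]
      lam_obj_unique_min[OF cond_plus[OF t] cond_minus[OF t]] by blast
qed

end
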